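(* Let $n,\ell$ be positive integers, let $f:(\mathbb{R}^n,0)\to(\mathbb{R}^n,0)$ be a $C^\infty$ map-germ, and for each $i$ with $1\le i\le \ell$ let $\mu_i:(\mathbb{R}^n,0)\to\mathbb{R}$ be a $C^\infty$ function-germ. Then the map-germ $F:(\mathbb{R}^n,0)\to\mathbb{R}^{n+\ell}$ defined by \[ F=\left(f,\ \mu_1|Jf|^2,\ \ldots,\ \mu_\ell|Jf|^2\right) \] is a frontal.
   Context: All map-germs, function-germs and vector fields are $C^\infty$. For a map-germ $f:(\mathbb{R}^n,0)\to(\mathbb{R}^n,0)$, $|Jf|$ denotes the Jacobian determinant of $f$ (so $|Jf|^2$ is its square). A vector field along a map-germ $F:(\mathbb{R}^n,0)\to\mathbb{R}^{n+\ell}$ is a germ $\Phi:(\mathbb{R}^n,0)\to T\mathbb{R}^{n+\ell}$ with $\pi\circ\Phi=F$, where $\pi$ is the tangent bundle projection; write $\Phi(x)=(F(x),\phi(x))$ with $\phi(x)\in T_{F(x)}\mathbb{R}^{n+\ell}\cong\mathbb{R}^{n+\ell}$. $F$ is called a frontal if there exist vector fields $\Phi_1,\ldots,\Phi_\ell$ along $F$, $\Phi_i=(F,\phi_i)$, such that: (1) for every $i$ and every germ of vector field $\xi$ on $(\mathbb{R}^n,0)$, $\phi_i(x)\cdot dF_x(\xi(x))=0$ (Euclidean scalar product) for all $x$ near $0$; (2) $\phi_i(0)\neq 0$ for every $i$; (3) $\phi_1(0),\ldots,\phi_\ell(0)$ are linearly independent. *)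

theory Defs
  imports "HOL-Analysis.Analysis"
begin

fun Ck_on :: "nat \<Rightarrow> ('a::real_normed_vector \<Rightarrow> 'b::real_normed_vector) \<Rightarrow> 'a set \<Rightarrow> bool" where
  "Ck_on 0 f U = continuous_on U f"
| "Ck_on (Suc k) f U =
     (\<exists>D. (\<forall>x\<in>U. (f has_derivative D x) (at x)) \<and> (\<forall>v. Ck_on k (\<lambda>x. D x v) U))"

definition smooth_on :: "('a::real_normed_vector \<Rightarrow> 'b::real_normed_vector) \<Rightarrow> 'a set \<Rightarrow> bool" where
  "smooth_on f U \<longleftrightarrow> (\<forall>k. Ck_on k f U)"

definition smooth_germ :: "('a::real_normed_vector \<Rightarrow> 'b::real_normed_vector) \<Rightarrow> bool" where
  "smooth_germ f \<longleftrightarrow> (\<exists>U. open U \<and> 0 \<in> U \<and> smooth_on f U)"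

definition jac_det :: "(real^'n \<Rightarrow> real^'n) \<Rightarrow> real^'n \<Rightarrow> real" where
  "jac_det f x = det (matrix (frechet_derivative f (at x)))"

text \<open>Frontal: F : (R^n,0) \<rightarrow> R^(n+l), with l = CARD('l). A vector field along F is
given by its vector part phi i :: R^n \<rightarrow> R^(n+l) (a smooth germ).\<close>
definition frontal :: "(real^'n \<Rightarrow> real^('n + 'l::finite)) \<Rightarrow> bool" where
  "frontal F \<longleftrightarrow>
    (\<exists>\<phi> :: 'l \<Rightarrow> real^'n \<Rightarrow> real^('n + 'l).
       (\<forall>i. smooth_germ (\<phi> i)) \<and>
       (\<forall>i. \<forall>\<xi> :: real^'n \<Rightarrow> real^'n. smooth_germ \<xi> \<longrightarrow>
            (\<forall>\<^sub>F x in nhds 0. \<phi> i x \<bullet> frechet_derivative F (at x) (\<xi> x) = 0)) \<and>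
       (\<forall>i. \<phi> i 0 \<noteq> 0) \<and>
       (\<forall>c :: 'l \<Rightarrow> real. (\<Sum>i\<in>UNIV. c i *\<^sub>R \<phi> i 0) = 0 \<longrightarrow> (\<forall>i. c i = 0)))"

end

theory Submission
  imports Defs
begin

(* Write A = Df and J = det A. A vector (a, e_i) is orthogonal to dF v = (A v, dg_i v) for all v
   iff a . A v = - dg_i v. When dg_i = J w_i for a smooth covector field w_i, the cofactor
   identity adj(A) A = J I shows that a = - w_i adj(A) is a solution; it is smooth even where
   J vanishes, and the e_i components make these normal fields independent. For g_i = mu_i J^2
   the factorisation dg_i = J (J dmu_i + 2 mu_i dJ) is the product rule. *)

lemma Ck_on_SucD: "Ck_on (Suc k) f U \<Longrightarrow> Ck_on k f U"
proof (induction k arbitrary: f)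
  case 0
  then obtain D where "\<forall>x\<in>U. (f has_derivative D x) (at x)" by auto
  then show ?case by (auto intro!: continuous_at_imp_continuous_on has_derivative_continuous)
next
  case (Suc k)
  then obtain D where "\<forall>x\<in>U. (f has_derivative D x) (at x)" "\<forall>v. Ck_on (Suc k) (\<lambda>x. D x v) U"
    by (metis Ck_on.simps(2))
  then show ?case using Suc.IH by auto
qed

lemma Ck_on_cong:
  assumes "Ck_on k f U" "open U" "\<And>x. x \<in> U \<Longrightarrow> f x = g x"
  shows "Ck_on k g U"
  using assms
proof (induction k arbitrary: f g)
  case 0
  then show ?case by (auto intro: continuous_on_cong[THEN iffD1])
next
  case (Suc k)
  then obtain D where D: "\<forall>x\<in>U. (f has_derivative D x) (at x)" "\<forall>v. Ck_on k (\<lambda>x. D x v) U"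
    by auto
  have "\<forall>x\<in>U. (g has_derivative D x) (at x)"
    using D(1) Suc.prems by (metis has_derivative_transform_within_open)
  then show ?case using D(2) by auto
qed

lemma Ck_on_subset: "Ck_on k f U \<Longrightarrow> V \<subseteq> U \<Longrightarrow> Ck_on k f V"
proof (induction k arbitrary: f)
  case 0
  then show ?case by (auto intro: continuous_on_subset)
next
  case (Suc k)
  then show ?case by (auto 0 3)
qed

lemma Ck_on_const: "Ck_on k (\<lambda>x. c) U"
proof (induction k arbitrary: c)
  case 0
  then show ?case by simp
next
  case (Suc k)
  then show ?case by (auto intro!: exI[of _ "\<lambda>x v. 0"])
qed

lemma Ck_on_add: "Ck_on k f U \<Longrightarrow> Ck_on k g U \<Longrightarrow> Ck_on k (\<lambda>x. f x + g x) U"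
proof (induction k arbitrary: f g)
  case 0
  then show ?case by (auto intro: continuous_on_add)
next
  case (Suc k)
  obtain Df where Df: "\<forall>x\<in>U. (f has_derivative Df x) (at x)" "\<forall>v. Ck_on k (\<lambda>x. Df x v) U"
    using Suc.prems by auto
  obtain Dg where Dg: "\<forall>x\<in>U. (g has_derivative Dg x) (at x)" "\<forall>v. Ck_on k (\<lambda>x. Dg x v) U"
    using Suc.prems by auto
  show ?case
    using Df Dg Suc.IH
    by (auto intro!: exI[of _ "\<lambda>x v. Df x v + Dg x v"] has_derivative_add)
qed

lemma Ck_on_bounded_linear:
  assumes "bounded_linear L"
  shows "Ck_on k f U \<Longrightarrow> Ck_on k (\<lambda>x. L (f x)) U"
proof (induction k arbitrary: f)
  case 0
  then show ?case
    using continuous_on_compose[of U f L] linear_continuous_on[OF assms]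
    by (auto simp: o_def intro: continuous_on_subset)
next
  case (Suc k)
  obtain Df where Df: "\<forall>x\<in>U. (f has_derivative Df x) (at x)" "\<forall>v. Ck_on k (\<lambda>x. Df x v) U"
    using Suc.prems by auto
  have "\<forall>x\<in>U. ((\<lambda>x. L (f x)) has_derivative (\<lambda>v. L (Df x v))) (at x)"
    using Df(1) bounded_linear.has_derivative[OF assms] by blast
  then show ?case
    using Df(2) Suc.IH by auto
qed

lemma Ck_on_bounded_bilinear:
  assumes "bounded_bilinear b"
  shows "Ck_on k f U \<Longrightarrow> Ck_on k g U \<Longrightarrow> Ck_on k (\<lambda>x. b (f x) (g x)) U"
proof (induction k arbitrary: f g)
  case 0
  then show ?case
    by (simp add: bounded_bilinear.continuous_on[OF assms])
next
  case (Suc k)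
  obtain Df where Df: "\<forall>x\<in>U. (f has_derivative Df x) (at x)" "\<forall>v. Ck_on k (\<lambda>x. Df x v) U"
    using Suc.prems by auto
  obtain Dg where Dg: "\<forall>x\<in>U. (g has_derivative Dg x) (at x)" "\<forall>v. Ck_on k (\<lambda>x. Dg x v) U"
    using Suc.prems by auto
  have "\<forall>x\<in>U. ((\<lambda>x. b (f x) (g x)) has_derivative
      (\<lambda>v. b (f x) (Dg x v) + b (Df x v) (g x))) (at x)"
    using Df(1) Dg(1) bounded_bilinear.FDERIV[OF assms] by blast
  moreover have "Ck_on k f U" "Ck_on k g U"
    using Suc.prems Ck_on_SucD by blast+
  ultimately show ?case
    using Df(2) Dg(2) Suc.IH by (auto intro!: Ck_on_add)
qed

lemma Ck_on_frechet_derivative: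
  assumes "Ck_on (Suc k) f U" "open U"
  shows "Ck_on k (\<lambda>x. frechet_derivative f (at x) v) U"
proof -
  obtain D where D: "\<forall>x\<in>U. (f has_derivative D x) (at x)" "\<forall>v. Ck_on k (\<lambda>x. D x v) U"
    using assms(1) by auto
  show ?thesis
    by (rule Ck_on_cong[OF D(2)[rule_format, of v] assms(2)]) (metis D(1) frechet_derivative_at)
qed


lemma smooth_on_subset: "smooth_on f U \<Longrightarrow> V \<subseteq> U \<Longrightarrow> smooth_on f V"
  unfolding smooth_on_def using Ck_on_subset by blast

lemma smooth_on_const: "smooth_on (\<lambda>x. c) U"
  by (simp add: smooth_on_def Ck_on_const)

lemma smooth_on_add: "smooth_on f U \<Longrightarrow> smooth_on g U \<Longrightarrow> smooth_on (\<lambda>x. f x + g x) U"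
  by (simp add: smooth_on_def Ck_on_add)

lemma smooth_on_bounded_linear:
  "bounded_linear L \<Longrightarrow> smooth_on f U \<Longrightarrow> smooth_on (\<lambda>x. L (f x)) U"
  by (simp add: smooth_on_def Ck_on_bounded_linear)

lemma smooth_on_bounded_bilinear:
  "bounded_bilinear b \<Longrightarrow> smooth_on f U \<Longrightarrow> smooth_on g U \<Longrightarrow> smooth_on (\<lambda>x. b (f x) (g x)) U"
  by (simp add: smooth_on_def Ck_on_bounded_bilinear)

lemma smooth_on_minus: "smooth_on f U \<Longrightarrow> smooth_on (\<lambda>x. - f x) U"
  using smooth_on_bounded_linear[OF bounded_linear_minus[OF bounded_linear_ident]] .

lemma smooth_on_mult:
  fixes f g :: "'a::real_normed_vector \<Rightarrow> 'b::real_normed_algebra"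
  shows "smooth_on f U \<Longrightarrow> smooth_on g U \<Longrightarrow> smooth_on (\<lambda>x. f x * g x) U"
  using smooth_on_bounded_bilinear[OF bounded_bilinear_mult] .

lemma smooth_on_scaleR: "smooth_on f U \<Longrightarrow> smooth_on g U \<Longrightarrow> smooth_on (\<lambda>x. f x *\<^sub>R g x) U"
  using smooth_on_bounded_bilinear[OF bounded_bilinear_scaleR] .

lemma smooth_on_sum:
  "finite S \<Longrightarrow> (\<And>i. i \<in> S \<Longrightarrow> smooth_on (f i) U) \<Longrightarrow> smooth_on (\<lambda>x. \<Sum>i\<in>S. f i x) U"
  by (induction S rule: finite_induct) (auto intro: smooth_on_const smooth_on_add)

lemma smooth_on_prod:
  fixes f :: "'i \<Rightarrow> 'a::real_normed_vector \<Rightarrow> 'b::real_normed_field"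
  shows "finite S \<Longrightarrow> (\<And>i. i \<in> S \<Longrightarrow> smooth_on (f i) U) \<Longrightarrow> smooth_on (\<lambda>x. \<Prod>i\<in>S. f i x) U"
  by (induction S rule: finite_induct) (auto intro: smooth_on_const smooth_on_mult)

lemma smooth_on_vec_nth: "smooth_on f U \<Longrightarrow> smooth_on (\<lambda>x. f x $ i) U"
  using smooth_on_bounded_linear[OF bounded_linear_vec_nth] .

lemma smooth_on_vec:
  fixes f :: "'a::real_normed_vector \<Rightarrow> real^'n"
  assumes "\<And>i. smooth_on (\<lambda>x. f x $ i) U"
  shows "smooth_on f U"
proof -
  have "smooth_on (\<lambda>x. \<Sum>i\<in>UNIV. (f x $ i) *\<^sub>R (axis i 1 :: real^'n)) U"
    by (intro smooth_on_sum smooth_on_scaleR assms smooth_on_const finite)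
  then show ?thesis
    by (simp add: basis_expansion flip: scalar_mult_eq_scaleR)
qed

lemma smooth_on_det:
  fixes M :: "'a::real_normed_vector \<Rightarrow> real^'n^'n"
  assumes "\<And>i j. smooth_on (\<lambda>x. M x $ i $ j) U"
  shows "smooth_on (\<lambda>x. det (M x)) U"
  unfolding det_def
  by (intro smooth_on_sum smooth_on_mult smooth_on_const smooth_on_prod assms finite_permutations finite)

lemma smooth_on_has_derivative:
  assumes "smooth_on f U" "x \<in> U"
  shows "(f has_derivative frechet_derivative f (at x)) (at x)"
proof -
  obtain D where "\<forall>x\<in>U. (f has_derivative D x) (at x)"
    using assms(1) unfolding smooth_on_def by (metis Ck_on.simps(2))
  then show ?thesis
    using assms(2) frechet_derivative_at by metis
qed

lemma smooth_on_differentiable: "smooth_on f U \<Longrightarrow> x \<in> U \<Longrightarrow> f differentiable (at x)"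
  using smooth_on_has_derivative by (rule differentiableI)

lemma smooth_on_frechet_derivative:
  "open U \<Longrightarrow> smooth_on f U \<Longrightarrow> smooth_on (\<lambda>x. frechet_derivative f (at x) v) U"
  unfolding smooth_on_def using Ck_on_frechet_derivative by blast

lemma smooth_germs_common_domain:
  fixes g :: "'i::finite \<Rightarrow> 'a::real_normed_vector \<Rightarrow> 'c::real_normed_vector"
  assumes "smooth_germ f" "\<And>i. smooth_germ (g i)"
  obtains U where "open U" "0 \<in> U" "smooth_on f U" "\<And>i. smooth_on (g i) U"
proof -
  obtain Uf where Uf: "open Uf" "0 \<in> Uf" "smooth_on f Uf"
    using assms(1) unfolding smooth_germ_def by blast
  obtain V where V: "\<And>i. open (V i) \<and> 0 \<in> V i \<and> smooth_on (g i) (V i)"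
    using assms(2) unfolding smooth_germ_def by metis
  let ?U = "Uf \<inter> (\<Inter>i. V i)"
  show thesis
  proof
    show "open ?U" using Uf(1) V by (intro open_Int open_INT) auto
    show "0 \<in> ?U" using Uf(2) V by auto
    show "smooth_on f ?U" using smooth_on_subset[OF Uf(3)] by blast
    show "smooth_on (g i) ?U" for i using smooth_on_subset[of "g i" "V i" ?U] V[of i] by auto
  qed
qed


definition grad :: "(real^'n \<Rightarrow> real) \<Rightarrow> real^'n \<Rightarrow> real^'n" where
  "grad g x = (\<chi> k. frechet_derivative g (at x) (axis k 1))"

lemma linear_eq_inner_axis:
  fixes D :: "real^'n \<Rightarrow> real"
  assumes "linear D"
  shows "D v = (\<chi> k. D (axis k 1)) \<bullet> v"
proof -
  have "D v = D (\<Sum>k\<in>UNIV. v $ k *\<^sub>R axis k 1)"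
    by (simp add: basis_expansion flip: scalar_mult_eq_scaleR)
  also have "\<dots> = (\<chi> k. D (axis k 1)) \<bullet> v"
    using assms by (simp add: linear_sum linear_scale inner_vec_def mult.commute)
  finally show ?thesis .
qed

lemma frechet_derivative_eq_inner_grad:
  "g differentiable (at x) \<Longrightarrow> frechet_derivative g (at x) v = grad g x \<bullet> v"
  unfolding grad_def
  by (intro linear_eq_inner_axis has_derivative_linear) (simp add: frechet_derivative_works)

lemma grad_mult:
  assumes "g differentiable (at x)" "h differentiable (at x)"
  shows "grad (\<lambda>x. g x * h x) x = g x *\<^sub>R grad h x + h x *\<^sub>R grad g x"
proof -
  have "((\<lambda>x. g x * h x) has_derivative
      (\<lambda>v. g x * frechet_derivative h (at x) v + frechet_derivative g (at x) v * h x)) (at x)"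
    using assms by (intro has_derivative_mult) (simp_all add: frechet_derivative_works)
  then show ?thesis
    unfolding grad_def by (simp add: frechet_derivative_at[symmetric] vec_eq_iff)
qed

lemma grad_mult_power2:
  assumes "g differentiable (at x)" "h differentiable (at x)"
  shows "grad (\<lambda>x. g x * (h x)\<^sup>2) x = h x *\<^sub>R (h x *\<^sub>R grad g x + (2 * g x) *\<^sub>R grad h x)"
proof -
  have "grad (\<lambda>x. g x * (h x)\<^sup>2) x
      = g x *\<^sub>R (h x *\<^sub>R grad h x + h x *\<^sub>R grad h x) + (h x * h x) *\<^sub>R grad g x"
    using assms by (simp add: power2_eq_square grad_mult)
  then show ?thesis
    by (simp add: scaleR_add_right scaleR_scaleR flip: scaleR_add_left)
qed

lemma smooth_on_grad: "open U \<Longrightarrow> smooth_on g U \<Longrightarrow> smooth_on (grad g) U"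
  unfolding grad_def by (intro smooth_on_vec) (simp add: smooth_on_frechet_derivative)

lemma smooth_on_matrix_frechet_derivative:
  "open U \<Longrightarrow> smooth_on f U \<Longrightarrow> smooth_on (\<lambda>x. matrix (frechet_derivative f (at x)) $ i $ j) U"
  unfolding matrix_def by (simp add: smooth_on_vec_nth smooth_on_frechet_derivative)

lemma smooth_on_jac_det: "open U \<Longrightarrow> smooth_on f U \<Longrightarrow> smooth_on (jac_det f) U"
  unfolding jac_det_def[abs_def] by (intro smooth_on_det smooth_on_matrix_frechet_derivative)


text \<open>Entry (k, m) of the adjugate is the cofactor of A at (m, k): the determinant of A with
  column k replaced by the m-th unit vector.\<close>
definition adjugate :: "'a::comm_ring_1^'n^'n \<Rightarrow> 'a^'n^'n" where
  "adjugate A = (\<chi> k m. det (\<chi> i. if i = k then axis m 1 else row i (transpose A)))"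

lemma det_replace_row_transpose:
  fixes A :: "'a::comm_ring_1^'n^'n"
  shows "det (\<chi> i. if i = k then z else row i (transpose A)) = (\<Sum>m\<in>UNIV. z $ m * adjugate A $ k $ m)"
proof -
  have "det (\<chi> i. if i = k then z else row i (transpose A))
      = det (\<chi> i. if i = k then (\<Sum>m\<in>UNIV. z $ m *s axis m 1) else row i (transpose A))"
    by (simp only: basis_expansion)
  also have "\<dots> = (\<Sum>m\<in>UNIV. det (\<chi> i. if i = k then z $ m *s axis m 1 else row i (transpose A)))"
    by (rule det_linear_row_sum) simp
  also have "\<dots> = (\<Sum>m\<in>UNIV. z $ m * adjugate A $ k $ m)"
    unfolding adjugate_def by (simp add: det_row_mul)
  finally show ?thesis .
qed

lemma adjugate_matrix_vector_mult:
  fixes A :: "'a::field^'n^'n"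
  shows "adjugate A *v (A *v y) = det A *s y"
proof -
  have rows: "(\<Sum>i\<in>UNIV. y $ i *s row i (transpose A)) = A *v y"
    by (simp add: vec_eq_iff sum_component row_def transpose_def matrix_vector_mult_def mult.commute)
  have "det (\<chi> i. if i = k then A *v y else row i (transpose A)) = y $ k * det A" for k
    using cramer_lemma_transpose[of k y "transpose A"] unfolding rows det_transpose .
  then show ?thesis
    by (simp add: vec_eq_iff matrix_vector_mult_def det_replace_row_transpose mult.commute)
qed

lemma smooth_on_adjugate:
  fixes M :: "'a::real_normed_vector \<Rightarrow> real^'n^'n"
  assumes "\<And>i j. smooth_on (\<lambda>x. M x $ i $ j) U"
  shows "smooth_on (\<lambda>x. adjugate (M x) $ k $ m) U"
  unfolding adjugate_def vec_lambda_beta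
proof (rule smooth_on_det)
  show "smooth_on (\<lambda>x. (\<chi> i. if i = k then axis m 1 else row i (transpose (M x))) $ r $ c) U" for r c
    by (cases "r = k") (simp_all add: row_def transpose_def smooth_on_const assms)
qed

lemma frechet_derivative_vec_nth:
  "g differentiable (at x) \<Longrightarrow>
    frechet_derivative g (at x) v $ j = frechet_derivative (\<lambda>x. g x $ j) (at x) v"
  using bounded_linear.has_derivative[OF bounded_linear_vec_nth frechet_derivative_works[THEN iffD1]]
  by (metis frechet_derivative_at)

lemma inner_vec_Plus:
  fixes x y :: "real^('a::finite + 'b::finite)"
  shows "x \<bullet> y = (\<Sum>m\<in>UNIV. x $ Inl m * y $ Inl m) + (\<Sum>i\<in>UNIV. x $ Inr i * y $ Inr i)"
  using sum.Plus[of "UNIV :: 'a set" "UNIV :: 'b set" "\<lambda>j. x $ j * y $ j"]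
  by (simp add: inner_vec_def o_def)


lemma frontalI:
  fixes F :: "real^'n \<Rightarrow> real^('n + 'l::finite)" and \<phi> :: "'l \<Rightarrow> real^'n \<Rightarrow> real^('n + 'l)"
  assumes "open U" "0 \<in> U" "\<And>i. smooth_on (\<phi> i) U"
    and "\<And>i x v. x \<in> U \<Longrightarrow> \<phi> i x \<bullet> frechet_derivative F (at x) v = 0"
    and "\<And>i i'. \<phi> i 0 $ Inr i' = (if i' = i then 1 else 0)"
  shows "frontal F"
  unfolding frontal_def
proof (intro exI[of _ \<phi>] conjI allI impI)
  show "smooth_germ (\<phi> i)" for i
    using assms(1-3) unfolding smooth_germ_def by blast
  show "\<forall>\<^sub>F x in nhds 0. \<phi> i x \<bullet> frechet_derivative F (at x) (\<xi> x) = 0" for i \<xi>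
    unfolding eventually_nhds using assms(1,2,4) by blast
  show "\<phi> i 0 \<noteq> 0" for i
    using assms(5)[of i i] by auto
  show "c i = 0" if "(\<Sum>i\<in>UNIV. c i *\<^sub>R \<phi> i 0) = 0" for c i
  proof -
    have "(\<Sum>i'\<in>UNIV. c i' *\<^sub>R \<phi> i' 0) $ Inr i = c i"
      by (simp add: sum_component assms(5) if_distrib[of "\<lambda>t. _ * t"] cong: if_cong)
    then show ?thesis using that by simp
  qed
qed

lemma frontal_if_grad_multiple_of_jac_det:
  fixes f :: "real^'n \<Rightarrow> real^'n" and g :: "'l::finite \<Rightarrow> real^'n \<Rightarrow> real"
    and \<omega> :: "'l \<Rightarrow> real^'n \<Rightarrow> real^'n"
  assumes U: "open U" "0 \<in> U" and f: "smooth_on f U"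
    and g: "\<And>i. smooth_on (g i) U" and \<omega>: "\<And>i. smooth_on (\<omega> i) U"
    and grad_g: "\<And>i x. x \<in> U \<Longrightarrow> grad (g i) x = jac_det f x *\<^sub>R \<omega> i x"
  shows "frontal ((\<lambda>x. \<chi> j. case j of Inl k \<Rightarrow> f x $ k | Inr i \<Rightarrow> g i x)
                   :: real^'n \<Rightarrow> real^('n + 'l))" (is "frontal ?F")
proof -
  define A where "A x = matrix (frechet_derivative f (at x))" for x
  define \<phi> :: "'l \<Rightarrow> real^'n \<Rightarrow> real^('n + 'l)" where
    "\<phi> i x = (\<chi> j. case j of Inl m \<Rightarrow> - (\<omega> i x v* adjugate (A x)) $ m
                             | Inr i' \<Rightarrow> if i' = i then 1 else 0)" for i x
  have A: "smooth_on (\<lambda>x. A x $ r $ c) U" for r c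
    unfolding A_def by (rule smooth_on_matrix_frechet_derivative[OF U(1) f])
  have smooth_\<phi>: "smooth_on (\<phi> i) U" for i
  proof (rule smooth_on_vec)
    show "smooth_on (\<lambda>x. \<phi> i x $ j) U" for j
      by (cases j) (simp_all add: \<phi>_def vector_matrix_mult_def smooth_on_const smooth_on_minus
          smooth_on_sum smooth_on_mult smooth_on_vec_nth smooth_on_adjugate \<omega> A)
  qed
  have normal_\<phi>: "\<phi> i x \<bullet> frechet_derivative ?F (at x) v = 0" if "x \<in> U" for i x v
  proof -
    have "smooth_on ?F U"
    proof (rule smooth_on_vec)
      show "smooth_on (\<lambda>x. ?F x $ j) U" for j
        by (cases j) (simp_all add: smooth_on_vec_nth f g)
    qed
    then have dF: "?F differentiable (at x)"
      using \<open>x \<in> U\<close> by (rule smooth_on_differentiable)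
    have df: "f differentiable (at x)" and dg: "g i differentiable (at x)"
      using smooth_on_differentiable f g \<open>x \<in> U\<close> by blast+
    have "frechet_derivative ?F (at x) v $ Inl m = (A x *v v) $ m" for m
      using frechet_derivative_vec_nth[OF dF] frechet_derivative_vec_nth[OF df]
        matrix_vector_mul(2)[OF has_derivative_linear[OF df[unfolded frechet_derivative_works]]]
      by (simp add: A_def)
    moreover have "frechet_derivative ?F (at x) v $ Inr i = jac_det f x * (\<omega> i x \<bullet> v)"
      using frechet_derivative_vec_nth[OF dF] frechet_derivative_eq_inner_grad[OF dg] grad_g \<open>x \<in> U\<close>
      by simp
    ultimately have "\<phi> i x \<bullet> frechet_derivative ?F (at x) v
        = - ((\<omega> i x v* adjugate (A x)) \<bullet> (A x *v v)) + jac_det f x * (\<omega> i x \<bullet> v)"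
      by (simp add: inner_vec_Plus \<phi>_def inner_vec_def sum_negf if_distrib[of "\<lambda>t. t * _"] cong: if_cong)
    also have "\<dots> = 0"
      by (simp add: dot_lmul_matrix adjugate_matrix_vector_mult scalar_mult_eq_scaleR jac_det_def A_def)
    finally show ?thesis .
  qed
  have "\<phi> i 0 $ Inr i' = (if i' = i then 1 else 0)" for i i'
    by (simp add: \<phi>_def)
  with U smooth_\<phi> normal_\<phi> show ?thesis
    by (rule frontalI)
qed

theorem theorem1:
  fixes f :: "real^'n \<Rightarrow> real^'n" and \<mu> :: "'l::finite \<Rightarrow> real^'n \<Rightarrow> real"
  assumes "smooth_germ f" and "f 0 = 0"
    and "\<forall>i. smooth_germ (\<mu> i)"
  shows "frontal ((\<lambda>x. \<chi> j. case j of Inl k \<Rightarrow> f x $ k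
                                   | Inr i \<Rightarrow> \<mu> i x * (jac_det f x)\<^sup>2)
                   :: real^'n \<Rightarrow> real^('n + 'l))"
proof -
  obtain U where U: "open U" "0 \<in> U" and f: "smooth_on f U" and \<mu>: "\<And>i. smooth_on (\<mu> i) U"
    using smooth_germs_common_domain assms(1,3) by metis
  define J where "J = jac_det f"
  have J: "smooth_on J U"
    unfolding J_def using U(1) f by (rule smooth_on_jac_det)
  define \<omega> where "\<omega> i x = J x *\<^sub>R grad (\<mu> i) x + (2 * \<mu> i x) *\<^sub>R grad J x" for i x
  show ?thesis
    unfolding J_def[symmetric]
  proof (rule frontal_if_grad_multiple_of_jac_det[where g = "\<lambda>i x. \<mu> i x * (J x)\<^sup>2", OF U f])
    show "smooth_on (\<lambda>x. \<mu> i x * (J x)\<^sup>2) U" for i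
      unfolding power2_eq_square by (intro smooth_on_mult \<mu> J)
    show "smooth_on (\<omega> i) U" for i
      unfolding \<omega>_def[abs_def]
      by (intro smooth_on_add smooth_on_scaleR smooth_on_mult smooth_on_grad smooth_on_const U \<mu> J)
    show "grad (\<lambda>x. \<mu> i x * (J x)\<^sup>2) x = jac_det f x *\<^sub>R \<omega> i x" if "x \<in> U" for i x
      using smooth_on_differentiable[OF \<mu> that] smooth_on_differentiable[OF J that]
      by (simp add: grad_mult_power2 \<omega>_def J_def[symmetric])
  qed
qed

end
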